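(* Let $V$ be a ground model, $\kappa$ an infinite cardinal, $\mathbb{A}\in V$ a Boolean algebra, and let $\dot{\mathcal{U}}_n$ ($n\in\omega$), $\dot{\mathcal{U}}$ be $\mathbb{M}_\kappa$-names for ultrafilters on $\mathbb{A}$, with $\varphi_n=\varphi_{\dot{\mathcal{U}}_n}$ and $\varphi=\varphi_{\dot{\mathcal{U}}}$. If $(\varphi_n)$ converges uniformly to $\varphi$, then for all but finitely many $n$ there is a condition $p_n\in\mathbb{M}_\kappa\setminus\{0\}$ such that $p_n\Vdash\dot{\mathcal{U}}_n=\dot{\mathcal{U}}$.
   Context: $\mathbb{M}_\kappa$ is the measure algebra $Bor(2^\kappa)/\mathcal{N}_\kappa$ of the standard product measure $\lambda_\kappa$ on $2^\kappa$, used as a forcing notion (conditions are nonzero elements). For an $\mathbb{M}_\kappa$-name $\dot{\mathcal{U}}$ with $\Vdash$ "$\dot{\mathcal{U}}$ is an ultrafilter on $\mathbb{A}$", $\varphi_{\dot{\mathcal{U}}}\colon\mathbb{A}\to\mathbb{M}_\kappa$ is the homomorphism $\varphi_{\dot{\mathcal{U}}}(A)=\llbracket A\in\dot{\mathcal{U}}\rrbracket$. $(\varphi_n)$ converges uniformly to $\varphi$ if for every $\varepsilon>0$ there is $N$ with $\lambda_\kappa(\varphi_n(A)\triangle\varphi(A))<\varepsilon$ for all $n>N$ and all $A\in\mathbb{A}$. *)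

theory Defs
  imports "HOL-Probability.Probability"
begin

text \<open>The measure space (2^kappa, product sigma-algebra, standard product measure lambda_kappa),
  with kappa represented by an infinite index type 'k.  Elements of the measure algebra M_kappa
  are represented by measurable sets, identified modulo null sets.\<close>

definition cantor_measure :: "('k \<Rightarrow> bool) measure" where
  "cantor_measure = PiM UNIV (\<lambda>_. measure_pmf (bernoulli_pmf (1/2)))"

definition symdiff :: "'x set \<Rightarrow> 'x set \<Rightarrow> 'x set" where
  "symdiff X Y = (X - Y) \<union> (Y - X)"

definition null_set_of :: "'x measure \<Rightarrow> 'x set \<Rightarrow> bool" where
  "null_set_of M X \<longleftrightarrow> X \<in> sets M \<and> emeasure M X = 0"

definition meas_alg_hom :: "'x measure \<Rightarrow> ('a::boolean_algebra \<Rightarrow> 'x set) \<Rightarrow> bool" where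
  "meas_alg_hom M \<phi> \<longleftrightarrow>
     (\<forall>a. \<phi> a \<in> sets M) \<and>
     (\<forall>a b. null_set_of M (symdiff (\<phi> (inf a b)) (\<phi> a \<inter> \<phi> b))) \<and>
     (\<forall>a. null_set_of M (symdiff (\<phi> (- a)) (space M - \<phi> a)))"

definition unif_conv :: "'x measure \<Rightarrow> (nat \<Rightarrow> 'a \<Rightarrow> 'x set) \<Rightarrow> ('a \<Rightarrow> 'x set) \<Rightarrow> bool" where
  "unif_conv M \<phi>s \<phi> \<longleftrightarrow>
     (\<forall>\<epsilon>>0. \<exists>N. \<forall>n>N. \<forall>a. measure M (symdiff (\<phi>s n a) (\<phi> a)) < \<epsilon>)"

text \<open>p forces U_n = U, where phi_n, phi are the associated homomorphisms:
  p is a nonzero condition below [[a \<in> U_n \<longleftrightarrow> a \<in> U]] for every a,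
  i.e. p \<inter> (phi_n a symdiff phi a) is null for every a.\<close>
definition forces_equal :: "'x measure \<Rightarrow> 'x set \<Rightarrow> ('a \<Rightarrow> 'x set) \<Rightarrow> ('a \<Rightarrow> 'x set) \<Rightarrow> bool" where
  "forces_equal M p \<psi> \<phi> \<longleftrightarrow> (\<forall>a. null_set_of M (p \<inter> symdiff (\<psi> a) (\<phi> a)))"

end

theory Submission
  imports Defs
begin

text \<open>Write \<open>E a\<close> for the set where the two homomorphisms disagree on \<open>a\<close>. Since both
  homomorphisms preserve symmetric differences, so does \<open>E\<close>, up to null sets; hence the sets
  \<open>E a\<close> form a group under symmetric difference. Inside such a group, for every finite
  subfamily some member has at least half the measure of its union: each point of the union lies
  in exactly half of the members generated by the subfamily. So if every \<open>E a\<close> has measure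
  below \<open>1/4\<close> (which uniform convergence gives for almost all \<open>n\<close>), every finite union has
  measure at most \<open>1/2\<close>, and so has a countable union \<open>S\<close> containing every \<open>E a\<close> up to a
  null set. The complement of \<open>S\<close> is the required condition.\<close>

lemma AE_iff_of_null_symdiff:
  assumes "null_set_of M (symdiff A B)"
  shows "AE x in M. x \<in> A \<longleftrightarrow> x \<in> B"
proof -
  have "AE x in M. x \<notin> symdiff A B"
    using assms by (intro AE_not_in) (auto simp: null_set_of_def)
  then show ?thesis by eventually_elim (auto simp: symdiff_def)
qed

lemma meas_alg_hom_inf_AE:
  assumes "meas_alg_hom M \<psi>"
  shows "AE x in M. x \<in> \<psi> (inf a b) \<longleftrightarrow> x \<in> \<psi> a \<and> x \<in> \<psi> b"
  using assms AE_iff_of_null_symdiff[of M "\<psi> (inf a b)" "\<psi> a \<inter> \<psi> b"]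
  by (simp add: meas_alg_hom_def)

lemma meas_alg_hom_compl_AE:
  assumes "meas_alg_hom M \<psi>"
  shows "AE x in M. x \<in> \<psi> (- a) \<longleftrightarrow> x \<notin> \<psi> a"
proof -
  have "AE x in M. x \<in> \<psi> (- a) \<longleftrightarrow> x \<in> space M - \<psi> a"
    using assms AE_iff_of_null_symdiff[of M "\<psi> (- a)" "space M - \<psi> a"]
    by (simp add: meas_alg_hom_def)
  with AE_space show ?thesis by eventually_elim auto
qed

lemma meas_alg_hom_sup_AE:
  assumes "meas_alg_hom M \<psi>"
  shows "AE x in M. x \<in> \<psi> (sup a b) \<longleftrightarrow> x \<in> \<psi> a \<or> x \<in> \<psi> b"
proof -
  have "AE x in M. x \<in> \<psi> (- inf (- a) (- b)) \<longleftrightarrow> x \<in> \<psi> a \<or> x \<in> \<psi> b"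
    using meas_alg_hom_compl_AE[OF assms, of "inf (- a) (- b)"]
      meas_alg_hom_inf_AE[OF assms, of "- a" "- b"]
      meas_alg_hom_compl_AE[OF assms, of a] meas_alg_hom_compl_AE[OF assms, of b]
    by eventually_elim auto
  then show ?thesis by simp
qed

definition bool_xor :: "'a::boolean_algebra \<Rightarrow> 'a \<Rightarrow> 'a" where
  "bool_xor a b = sup (inf a (- b)) (inf (- a) b)"

lemma meas_alg_hom_xor_AE:
  assumes "meas_alg_hom M \<psi>"
  shows "AE x in M. x \<in> \<psi> (bool_xor a b) \<longleftrightarrow> ((x \<in> \<psi> a) \<noteq> (x \<in> \<psi> b))"
  using meas_alg_hom_sup_AE[OF assms, of "inf a (- b)" "inf (- a) b"]
    meas_alg_hom_inf_AE[OF assms, of a "- b"] meas_alg_hom_inf_AE[OF assms, of "- a" b]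
    meas_alg_hom_compl_AE[OF assms, of a] meas_alg_hom_compl_AE[OF assms, of b]
  unfolding bool_xor_def by eventually_elim auto

lemma (in finite_measure) symdiff_closed_family_far_member:
  assumes sets: "\<And>a. E a \<in> sets M"
    and closed: "\<And>a b. \<exists>c. AE x in M. x \<in> E c \<longleftrightarrow> ((x \<in> E a) \<noteq> (x \<in> E b))"
    and "finite F" and "X \<in> sets M"
  shows "\<exists>c. measure M (X - (\<Union>a\<in>F. E a)) + measure M (\<Union>a\<in>F. E a) / 2
             \<le> measure M (symdiff X (E c))"
  using \<open>finite F\<close> \<open>X \<in> sets M\<close>
proof (induction F arbitrary: X rule: finite_induct)
  case empty
  obtain c where "AE x in M. x \<notin> E c"
    using closed[of undefined undefined] by (auto elim: AE_mp)
  then have "measure M (symdiff X (E c)) = measure M X"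
    using empty.prems sets by (intro measure_eq_AE) (auto simp: symdiff_def elim!: AE_mp)
  then show ?case by (intro exI[of _ c]) simp
next
  case (insert a F)
  define U where "U = (\<Union>a\<in>F. E a)"
  have U: "U \<in> sets M"
    unfolding U_def using sets insert.hyps(1) by auto
  have XEa: "symdiff X (E a) \<in> sets M"
    using insert.prems sets by (auto simp: symdiff_def)
  text \<open>Either a member far from \<open>X\<close>, or the sum with \<open>E a\<close> of a member far from
    \<open>symdiff X (E a)\<close>; the two lower bounds average to the required one.\<close>
  obtain c1 where c1: "measure M (X - U) + measure M U / 2 \<le> measure M (symdiff X (E c1))"
    using insert.IH[OF insert.prems] by (auto simp: U_def)
  obtain c2 where c2: "measure M (symdiff X (E a) - U) + measure M U / 2
      \<le> measure M (symdiff (symdiff X (E a)) (E c2))"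
    using insert.IH[OF XEa] by (auto simp: U_def)
  obtain c3 where c3: "AE x in M. x \<in> E c3 \<longleftrightarrow> ((x \<in> E a) \<noteq> (x \<in> E c2))"
    using closed by blast
  have c2_c3: "measure M (symdiff (symdiff X (E a)) (E c2)) = measure M (symdiff X (E c3))"
    using c3 insert.prems sets
    by (intro measure_eq_AE) (auto simp: symdiff_def elim!: AE_mp)
  have "measure M (X - U) = measure M (X - (E a \<union> U)) + measure M (X \<inter> E a - U)"
    "measure M (symdiff X (E a) - U) = measure M (X - (E a \<union> U)) + measure M (E a - U - X)"
    "measure M (E a \<union> U) = measure M U + measure M (E a - U)"
    "measure M (E a - U) = measure M (X \<inter> E a - U) + measure M (E a - U - X)"
    using insert.prems sets U
    by (subst finite_measure_Union[symmetric]; force simp: symdiff_def intro!: arg_cong[where f="measure M"])+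
  then have "measure M (X - (E a \<union> U)) + measure M (E a \<union> U) / 2
      \<le> max (measure M (symdiff X (E c1))) (measure M (symdiff X (E c3)))"
    using c1 c2 c2_c3 by linarith
  then show ?case
    unfolding U_def le_max_iff_disj by auto
qed

lemma (in finite_measure) symdiff_closed_family_finite_Union_le:
  assumes "\<And>a. E a \<in> sets M"
    and "\<And>a b. \<exists>c. AE x in M. x \<in> E c \<longleftrightarrow> ((x \<in> E a) \<noteq> (x \<in> E b))"
    and "\<And>a. measure M (E a) \<le> r" and "finite F"
  shows "measure M (\<Union>a\<in>F. E a) \<le> 2 * r"
proof -
  obtain c where "measure M (\<Union>a\<in>F. E a) / 2 \<le> measure M (E c)"
    using symdiff_closed_family_far_member[OF assms(1,2,4), of "{}"]
    by (auto simp: symdiff_def)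
  then show ?thesis using assms(3)[of c] by linarith
qed

lemma (in finite_measure) measure_UN_le_of_finite_Union_le:
  assumes sets: "\<And>a. E a \<in> sets M"
    and bound: "\<And>F. finite F \<Longrightarrow> measure M (\<Union>a\<in>F. E a) \<le> r"
    and "\<And>k::nat. finite (Fs k)"
  shows "measure M (\<Union>k. \<Union>a\<in>Fs k. E a) \<le> r"
proof -
  define T where "T K = (\<Union>a\<in>(\<Union>k\<le>K. Fs k). E a)" for K
  have fin: "finite (\<Union>k\<le>K. Fs k)" for K
    using assms(3) by blast
  have T: "T K \<in> sets M" "measure M (T K) \<le> r" for K
    unfolding T_def using sets fin[of K] bound[OF fin[of K]] by auto
  have "incseq T"
    unfolding T_def incseq_def by (auto 0 4 intro: order_trans)
  then have "(\<lambda>K. measure M (T K)) \<longlonglongrightarrow> measure M (\<Union>K. T K)"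
    using T(1) by (intro finite_Lim_measure_incseq) auto
  moreover have "(\<Union>K. T K) = (\<Union>k. \<Union>a\<in>Fs k. E a)"
    unfolding T_def by blast
  ultimately show ?thesis
    using T(2) by (intro LIMSEQ_le_const2) auto
qed

lemma (in finite_measure) ess_cover_of_finite_Union_le:
  assumes sets: "\<And>a. E a \<in> sets M"
    and bound: "\<And>F. finite F \<Longrightarrow> measure M (\<Union>a\<in>F. E a) \<le> r"
  obtains S where "S \<in> sets M" "measure M S \<le> r" "\<And>a. E a - S \<in> null_sets M"
proof -
  define U where "U F = (\<Union>a\<in>F. E a)" for F
  have U: "U F \<in> sets M" if "finite F" for F
    unfolding U_def using sets that by auto
  define s where "s = (SUP F\<in>{F. finite F}. measure M (U F))"
  have bdd: "bdd_above ((\<lambda>F. measure M (U F)) ` {F. finite F})"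
    using bound by (intro bdd_aboveI[of _ r]) (auto simp: U_def)
  have U_le_s: "measure M (U F) \<le> s" if "finite F" for F
    unfolding s_def using bdd that by (intro cSUP_upper) auto
  have "\<exists>F. finite F \<and> s - 1 / Suc k < measure M (U F)" for k :: nat
    using less_cSUP_iff[OF _ bdd, of "s - 1 / Suc k"] by (auto simp: s_def)
  then obtain Fs where Fs: "\<And>k. finite (Fs k)" "\<And>k. s - 1 / Suc k < measure M (U (Fs k))"
    by metis
  define S where "S = (\<Union>k. U (Fs k))"
  have S: "S \<in> sets M"
    unfolding S_def using U Fs(1) by auto
  have "measure M S \<le> r"
    unfolding S_def U_def using measure_UN_le_of_finite_Union_le[OF sets bound Fs(1)] .
  moreover have "E a - S \<in> null_sets M" for a
  proof -
    have le: "measure M (E a - S) \<le> 1 / Suc k" for k :: nat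
    proof -
      have "measure M (U (Fs k)) + measure M (E a - S) = measure M (U (Fs k) \<union> (E a - S))"
        using U[OF Fs(1)] sets S by (intro finite_measure_Union[symmetric]) (auto simp: S_def)
      also have "\<dots> \<le> measure M (U (insert a (Fs k)))"
      proof (rule finite_measure_mono)
        show "U (Fs k) \<union> (E a - S) \<subseteq> U (insert a (Fs k))"
          by (auto simp: U_def)
        show "U (insert a (Fs k)) \<in> sets M"
          using Fs(1) by (intro U) simp
      qed
      also have "\<dots> \<le> s"
        using Fs(1) by (intro U_le_s) auto
      finally show ?thesis using Fs(2)[of k] by linarith
    qed
    have "measure M (E a - S) \<le> 0"
    proof (rule ccontr)
      assume "\<not> measure M (E a - S) \<le> 0"
      then obtain k where "inverse (real (Suc k)) < measure M (E a - S)"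
        using reals_Archimedean[of "measure M (E a - S)"] by auto
      with le[of k] show False
        by (simp add: inverse_eq_divide)
    qed
    then have "measure M (E a - S) = 0"
      using measure_nonneg[of M "E a - S"] by linarith
    then show ?thesis
      using sets S by (auto simp: null_sets_def emeasure_eq_measure)
  qed
  ultimately show ?thesis using that S by blast
qed

lemma (in prob_space) exists_forces_equal_if_close:
  assumes \<psi>: "meas_alg_hom M \<psi>" and \<phi>: "meas_alg_hom M \<phi>"
    and close: "\<And>a. measure M (symdiff (\<psi> a) (\<phi> a)) \<le> 1/4"
  shows "\<exists>p \<in> sets M. emeasure M p \<noteq> 0 \<and> forces_equal M p \<psi> \<phi>"
proof -
  define E where "E a = symdiff (\<psi> a) (\<phi> a)" for a
  have sets: "E a \<in> sets M" for a
    using \<psi> \<phi> by (auto simp: E_def symdiff_def meas_alg_hom_def)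
  have closed: "\<exists>c. AE x in M. x \<in> E c \<longleftrightarrow> ((x \<in> E a) \<noteq> (x \<in> E b))" for a b
  proof
    show "AE x in M. x \<in> E (bool_xor a b) \<longleftrightarrow> ((x \<in> E a) \<noteq> (x \<in> E b))"
      using meas_alg_hom_xor_AE[OF \<psi>, of a b] meas_alg_hom_xor_AE[OF \<phi>, of a b]
      by eventually_elim (auto simp: E_def symdiff_def)
  qed
  have small: "measure M (E a) \<le> 1/4" for a
    unfolding E_def by (rule close)
  have finite_Union_le: "measure M (\<Union>a\<in>F. E a) \<le> 1/2" if "finite F" for F
    using symdiff_closed_family_finite_Union_le[OF sets closed small that] by simp
  obtain S where S: "S \<in> sets M" "measure M S \<le> 1/2" "\<And>a. E a - S \<in> null_sets M"
    using ess_cover_of_finite_Union_le[OF sets finite_Union_le] by blast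
  have "measure M (space M - S) \<noteq> 0"
    using prob_compl[OF S(1)] S(2) by linarith
  moreover have "forces_equal M (space M - S) \<psi> \<phi>"
  proof -
    have "(space M - S) \<inter> E a = E a - S" for a
      using sets.sets_into_space[OF sets] by blast
    then show ?thesis
      using S(3) by (auto simp: forces_equal_def null_set_of_def E_def)
  qed
  ultimately show ?thesis
    using S(1) by (intro bexI[of _ "space M - S"]) (auto simp: emeasure_eq_measure)
qed

lemma prob_space_cantor_measure: "prob_space cantor_measure"
  unfolding cantor_measure_def by (intro prob_space_PiM prob_space_measure_pmf)

theorem theorem7p5:
  fixes \<phi>s :: "nat \<Rightarrow> 'a::boolean_algebra \<Rightarrow> ('k \<Rightarrow> bool) set"
    and \<phi> :: "'a \<Rightarrow> ('k \<Rightarrow> bool) set"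
  assumes "infinite (UNIV :: 'k set)"
    and "\<And>n. meas_alg_hom cantor_measure (\<phi>s n)"
    and "meas_alg_hom cantor_measure \<phi>"
    and "unif_conv cantor_measure \<phi>s \<phi>"
  shows "\<forall>\<^sub>F n in sequentially. \<exists>p \<in> sets cantor_measure.
           emeasure cantor_measure p \<noteq> 0 \<and> forces_equal cantor_measure p (\<phi>s n) \<phi>"
proof -
  interpret prob_space cantor_measure
    by (rule prob_space_cantor_measure)
  obtain N where "\<forall>n>N. \<forall>a. measure cantor_measure (symdiff (\<phi>s n a) (\<phi> a)) < 1/4"
    using assms(4) unfolding unif_conv_def by (meson zero_less_divide_1_iff zero_less_numeral)
  then have "\<forall>\<^sub>F n in sequentially. \<forall>a. measure cantor_measure (symdiff (\<phi>s n a) (\<phi> a)) \<le> 1/4"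
    by (auto simp: eventually_sequentially intro!: exI[of _ "Suc N"] less_imp_le)
  then show ?thesis
    by eventually_elim (rule exists_forces_equal_if_close[OF assms(2,3)], blast)
qed

end
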